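(* Let $a\in\mathcal{T}_n$ have rank $k$ with $k<n$ and kernel type $\lambda$. Let $G\le\mathcal{S}_n$ be a group which is $k$-homogeneous and $\lambda$-homogeneous. Then $(a,G)$ is an $\mathcal{S}_n$-pair, i.e. $\langle a,G\rangle\setminus G=\langle a,\mathcal{S}_n\rangle\setminus\mathcal{S}_n$.
   Context: $\Omega=\{1,\ldots,n\}$, $\mathcal{T}_n$ is the monoid of all maps $\Omega\to\Omega$, $\mathcal{S}_n$ the symmetric group. $\operatorname{rank}(a)=|\Omega a|$; the kernel of $a$ is the partition of $\Omega$ into the classes of $\{(x,y):xa=ya\}$, and its type is the non-increasing list of class sizes. $G$ is $k$-homogeneous if transitive on $k$-subsets of $\Omega$. For a partition $\lambda$ of $n$, $G$ is $\lambda$-homogeneous if for any two ordered partitions $(A_1,A_2,\ldots)$, $(B_1,B_2,\ldots)$ of $\Omega$ with $|A_i|=|B_i|=\lambda_i$ there is $g\in G$ mapping the set of parts $\{A_1,A_2,\ldots\}$ onto $\{B_1,B_2,\ldots\}$. *)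

theory Defs
  imports Main "HOL-Library.Multiset"
begin

text \<open>Omega = {1..n}. A map Omega -> Omega is represented extensionally as a function
  nat => nat that maps Omega into Omega and is the identity outside Omega.\<close>

definition Tn :: "nat \<Rightarrow> (nat \<Rightarrow> nat) set" where
  "Tn n = {f. f ` {1..n} \<subseteq> {1..n} \<and> (\<forall>x. x \<notin> {1..n} \<longrightarrow> f x = x)}"

definition Sn :: "nat \<Rightarrow> (nat \<Rightarrow> nat) set" where
  "Sn n = {f \<in> Tn n. bij_betw f {1..n} {1..n}}"

text \<open>Maps act on the right: x(ab) = (xa)b, so the product a*b is the function b o a.\<close>
definition tmult :: "(nat \<Rightarrow> nat) \<Rightarrow> (nat \<Rightarrow> nat) \<Rightarrow> (nat \<Rightarrow> nat)" where
  "tmult a b = b \<circ> a"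

inductive_set gen :: "(nat \<Rightarrow> nat) set \<Rightarrow> (nat \<Rightarrow> nat) set" for S where
  base: "x \<in> S \<Longrightarrow> x \<in> gen S"
| mult: "x \<in> gen S \<Longrightarrow> y \<in> gen S \<Longrightarrow> tmult x y \<in> gen S"

definition is_subgroup_Sn :: "nat \<Rightarrow> (nat \<Rightarrow> nat) set \<Rightarrow> bool" where
  "is_subgroup_Sn n G \<longleftrightarrow> G \<subseteq> Sn n \<and> id \<in> G \<and>
     (\<forall>g\<in>G. \<forall>h\<in>G. tmult g h \<in> G) \<and> (\<forall>g\<in>G. \<exists>h\<in>G. tmult g h = id)"

definition rank :: "nat \<Rightarrow> (nat \<Rightarrow> nat) \<Rightarrow> nat" where
  "rank n a = card (a ` {1..n})"

definition kernel_classes :: "nat \<Rightarrow> (nat \<Rightarrow> nat) \<Rightarrow> nat set set" where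
  "kernel_classes n a = {{x \<in> {1..n}. a x = y} | y. y \<in> a ` {1..n}}"

definition kernel_type :: "nat \<Rightarrow> (nat \<Rightarrow> nat) \<Rightarrow> nat list" where
  "kernel_type n a = rev (sorted_list_of_multiset (image_mset card (mset_set (kernel_classes n a))))"

definition k_homogeneous :: "nat \<Rightarrow> nat \<Rightarrow> (nat \<Rightarrow> nat) set \<Rightarrow> bool" where
  "k_homogeneous n k G \<longleftrightarrow>
     (\<forall>A B. A \<subseteq> {1..n} \<and> B \<subseteq> {1..n} \<and> card A = k \<and> card B = k \<longrightarrow> (\<exists>g\<in>G. g ` A = B))"

definition ordered_partition :: "nat \<Rightarrow> nat list \<Rightarrow> nat set list \<Rightarrow> bool" where
  "ordered_partition n lam As \<longleftrightarrow> length As = length lam \<and>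
     (\<forall>i<length As. card (As ! i) = lam ! i) \<and>
     (\<forall>i<length As. \<forall>j<length As. i \<noteq> j \<longrightarrow> As ! i \<inter> As ! j = {}) \<and>
     \<Union> (set As) = {1..n}"

definition lam_homogeneous :: "nat \<Rightarrow> nat list \<Rightarrow> (nat \<Rightarrow> nat) set \<Rightarrow> bool" where
  "lam_homogeneous n lam G \<longleftrightarrow>
     (\<forall>As Bs. ordered_partition n lam As \<and> ordered_partition n lam Bs \<longrightarrow>
        (\<exists>g\<in>G. (\<lambda>X. g ` X) ` set As = set Bs))"

end

theory Submission
  imports Defs "HOL-Combinatorics.Cycles"
begin

(* Every element of M = <a,G> outside G has rank at most k < n, so it is not a permutation.
   Conversely, an element of <a,S_n> outside S_n is a product of factors h a h' with h, h' in
   S_n, so it suffices to show h a h' \<in> M.  By lambda-homogeneity some g \<in> G gives a g the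
   kernel of h a, hence h a h' = g a \<phi> for an injection \<phi> of the image I of a into \<Omega>, and
   it remains to put every a \<phi> into M.  For \<phi> = id this is a itself, and every injection
   is reached from id by moving one image point at a time to a point outside the image.
   Such a move is performed by an element of M that sends a point x of a k-set Q to a point
   y outside Q and fixes Q - {x}: by k- and lambda-homogeneity, M contains an element fixing
   (Q - {x}) \<union> {y} pointwise that identifies x with y. *)

lemma tmult_assoc: "tmult (tmult f g) h = tmult f (tmult g h)"
  by (simp add: tmult_def o_assoc)

lemma tmult_id [simp]: "tmult f id = f" "tmult id f = f"
  by (simp_all add: tmult_def)

lemma Tn_eqI:
  assumes "f \<in> Tn n" "g \<in> Tn n" "\<And>x. x \<in> {1..n} \<Longrightarrow> f x = g x"
  shows "f = g"
proof
  fix x show "f x = g x" using assms by (cases "x \<in> {1..n}") (auto simp: Tn_def)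
qed

lemma tmult_Tn: "f \<in> Tn n \<Longrightarrow> g \<in> Tn n \<Longrightarrow> tmult f g \<in> Tn n"
  by (auto simp: Tn_def tmult_def)

lemma Sn_iff_permutes: "g \<in> Sn n \<longleftrightarrow> g permutes {1..n}"
  by (auto simp: Sn_def Tn_def permutes_altdef bij_betw_def)

lemma Sn_Tn: "g \<in> Sn n \<Longrightarrow> g \<in> Tn n"
  by (simp add: Sn_def)

lemma Sn_mem: "g \<in> Sn n \<Longrightarrow> x \<in> {1..n} \<Longrightarrow> g x \<in> {1..n}"
  by (metis Sn_iff_permutes permutes_in_image)

lemma id_Sn: "id \<in> Sn n"
  by (simp add: Sn_iff_permutes)

lemma tmult_Sn: "f \<in> Sn n \<Longrightarrow> g \<in> Sn n \<Longrightarrow> tmult f g \<in> Sn n"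
  by (simp add: Sn_iff_permutes tmult_def permutes_compose)

lemma gen_Tn: assumes "S \<subseteq> Tn n" shows "x \<in> gen S \<Longrightarrow> x \<in> Tn n"
  by (induction rule: gen.induct) (use assms in \<open>auto intro: tmult_Tn\<close>)

lemma gen_mono: assumes "S \<subseteq> S'" shows "x \<in> gen S \<Longrightarrow> x \<in> gen S'"
  by (induction rule: gen.induct) (use assms in \<open>auto intro: gen.intros\<close>)

lemma gen_funpow: "u \<in> gen S \<Longrightarrow> 0 < m \<Longrightarrow> u ^^ m \<in> gen S"
proof (induction m)
  case (Suc m)
  have "u ^^ Suc m = tmult (u ^^ m) u"
    by (simp only: funpow.simps(2) tmult_def)
  then show ?case
    using Suc gen.mult[of "u ^^ m" S u] by (cases "m = 0") simp_all
qed simp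

lemma bij_betw_extends_to_Sn:
  assumes S: "S \<subseteq> {1..n}" and U: "U \<subseteq> {1..n}" and \<beta>: "bij_betw \<beta> S U"
  obtains p where "p \<in> Sn n" "\<And>s. s \<in> S \<Longrightarrow> p s = \<beta> s"
proof -
  have "card ({1..n} - S) = card ({1..n} - U)"
    using S U bij_betw_same_card[OF \<beta>] by (simp add: card_Diff_subset finite_subset)
  then obtain \<gamma> where \<gamma>: "bij_betw \<gamma> ({1..n} - S) ({1..n} - U)"
    using finite_same_card_bij by blast
  define p where "p z = (if z \<in> S then \<beta> z else if z \<in> {1..n} then \<gamma> z else z)" for z
  have "bij_betw p S U"
    using \<beta> by (rule bij_betw_cong[THEN iffD1, rotated]) (simp add: p_def)
  moreover have "bij_betw p ({1..n} - S) ({1..n} - U)"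
    using \<gamma> by (rule bij_betw_cong[THEN iffD1, rotated]) (simp add: p_def)
  ultimately have "bij_betw p (S \<union> ({1..n} - S)) (U \<union> ({1..n} - U))"
    by (rule bij_betw_combine) blast
  moreover have "S \<union> ({1..n} - S) = {1..n}" "U \<union> ({1..n} - U) = {1..n}"
    using S U by auto
  ultimately have "bij_betw p {1..n} {1..n}"
    by simp
  moreover have "p z = z" if "z \<notin> {1..n}" for z
    using that S by (auto simp: p_def)
  ultimately have "p permutes {1..n}"
    by (rule bij_imp_permutes)
  then have "p \<in> Sn n"
    by (simp add: Sn_iff_permutes)
  then show thesis
    by (rule that) (simp add: p_def)
qed

lemma bij_betw_with_value:
  assumes "finite A" "finite B" "card A = card B" "x \<in> A" "y \<in> B"
  obtains f where "bij_betw f A B" "f x = y"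
proof -
  have "card (A - {x}) = card (B - {y})"
    using assms by simp
  then obtain f where f: "bij_betw f (A - {x}) (B - {y})"
    using assms finite_same_card_bij by (meson finite_Diff)
  have "bij_betw (f(x := y)) (A - {x}) (B - {y})"
    using f by (rule bij_betw_cong[THEN iffD1, rotated]) simp
  then have "bij_betw (f(x := y)) ({x} \<union> (A - {x})) ({y} \<union> (B - {y}))"
    by (intro bij_betw_combine) auto
  then show thesis
    using assms that[of "f(x := y)"] by (simp add: insert_absorb)
qed

lemma inj_on_self_map_funpow_fixes:
  assumes "finite Q" "u ` Q \<subseteq> Q" "inj_on u Q"
  obtains m where "0 < m" "\<And>q. q \<in> Q \<Longrightarrow> (u ^^ m) q = q"
proof -
  define p where "p x = (if x \<in> Q then u x else x)" for x
  have "bij_betw u Q Q"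
    using assms endo_inj_surj by (simp add: bij_betw_def)
  then have "p permutes Q"
    by (intro bij_imp_permutes) (auto simp: p_def cong: bij_betw_cong)
  then obtain m where m: "0 < m" "p ^^ m = id"
    using assms(1) permutation_is_nilpotent permutes_imp_permutation by metis
  have "(u ^^ i) q = (p ^^ i) q \<and> (u ^^ i) q \<in> Q" if "q \<in> Q" for i q
    using that assms(2) by (induction i) (auto simp: p_def)
  with m show thesis by (intro that) auto
qed

lemma Sn_with_values:
  assumes Q: "Q \<subseteq> {1..n}" and T: "T \<subseteq> {1..n}" and card: "card Q = card T"
    and "x \<in> Q" "c1 \<in> T" and y: "y \<in> {1..n}" "y \<notin> Q" and c2: "c2 \<in> {1..n}" "c2 \<notin> T"
  obtains p where "p \<in> Sn n" "p ` Q = T" "p x = c1" "p y = c2"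
proof -
  obtain \<delta> where \<delta>: "bij_betw \<delta> Q T" "\<delta> x = c1"
    using bij_betw_with_value[of Q T x c1] finite_subset[OF Q] finite_subset[OF T] card assms(4,5)
    by blast
  have "bij_betw (\<delta>(y := c2)) Q T"
    using \<delta>(1) by (rule bij_betw_cong[THEN iffD1, rotated]) (use y(2) in auto)
  then have "bij_betw (\<delta>(y := c2)) ({y} \<union> Q) ({c2} \<union> T)"
    using c2(2) by (intro bij_betw_combine) auto
  then obtain p where p: "p \<in> Sn n" "\<And>z. z \<in> {y} \<union> Q \<Longrightarrow> p z = (\<delta>(y := c2)) z"
    using bij_betw_extends_to_Sn[of "{y} \<union> Q" n "{c2} \<union> T"] Q T y(1) c2(1) by blast
  have "p ` Q = \<delta> ` Q"
    using p(2) y(2) by (auto simp: image_def)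
  also have "\<dots> = T"
    using \<delta>(1) by (rule bij_betw_imp_surj_on)
  finally show thesis
    using p \<delta>(2) y(2) \<open>x \<in> Q\<close> by (intro that[of p]) auto
qed

lemma exists_not_in_image:
  assumes "finite A" "finite B" "card A < card B"
  obtains z where "z \<in> B" "z \<notin> f ` A"
proof -
  have "card (f ` A) < card B"
    using card_image_le[OF assms(1), of f] assms(3) by linarith
  then have "\<not> B \<subseteq> f ` A"
    using assms(1) by (meson card_mono finite_imageI not_le)
  then show thesis
    using that by blast
qed

lemma injections_reachable_by_moves:
  fixes P :: "('a \<Rightarrow> 'b) \<Rightarrow> bool"
  assumes fin: "finite I" "finite \<Omega>" and less: "card I < card \<Omega>"
    and start: "P \<phi>0" "inj_on \<phi>0 I" "\<phi>0 ` I \<subseteq> \<Omega>"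
    and move: "\<And>\<psi> t v. P \<psi> \<Longrightarrow> inj_on \<psi> I \<Longrightarrow> \<psi> ` I \<subseteq> \<Omega> \<Longrightarrow> t \<in> I \<Longrightarrow>
                 v \<in> \<Omega> \<Longrightarrow> v \<notin> \<psi> ` I \<Longrightarrow> P (\<psi>(t := v))"
    and \<phi>: "inj_on \<phi> I" "\<phi> ` I \<subseteq> \<Omega>"
  obtains \<psi> where "P \<psi>" "\<forall>z\<in>I. \<psi> z = \<phi> z"
proof -
  define good where "good \<psi> \<longleftrightarrow> P \<psi> \<and> inj_on \<psi> I \<and> \<psi> ` I \<subseteq> \<Omega>" for \<psi>
  have good_move: "good (\<psi>(t := v))" if "good \<psi>" "t \<in> I" "v \<in> \<Omega>" "v \<notin> \<psi> ` I" for \<psi> t v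
    using that move[of \<psi> t v] inj_on_fun_updI[of \<psi> I v t] by (auto simp: good_def)
  have "\<exists>\<psi>. good \<psi> \<and> (\<forall>z\<in>J. \<psi> z = \<phi> z)" if "J \<subseteq> I" for J
    using finite_subset[OF that fin(1)] that
  proof (induction J rule: finite_subset_induct)
    case empty
    then show ?case using start by (auto simp: good_def)
  next
    case (insert t J)
    then obtain \<psi> where \<psi>: "good \<psi>" "\<forall>z\<in>J. \<psi> z = \<phi> z" by blast
    have "\<exists>\<psi>1. good \<psi>1 \<and> (\<forall>z\<in>J. \<psi>1 z = \<phi> z) \<and> \<phi> t \<notin> \<psi>1 ` I"
    proof (cases "\<phi> t \<in> \<psi> ` I")
      case True
      then obtain t' where t': "t' \<in> I" "\<psi> t' = \<phi> t" by auto
      have "t' \<notin> J"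
        using t' \<psi>(2) \<phi>(1) insert by (metis inj_onD subsetD)
      obtain z0 where z0: "z0 \<in> \<Omega>" "z0 \<notin> \<psi> ` I"
        using exists_not_in_image[OF fin less] by blast
      have "\<phi> t \<notin> \<psi>(t' := z0) ` I"
      proof
        assume "\<phi> t \<in> \<psi>(t' := z0) ` I"
        then obtain z where "z \<in> I" "(\<psi>(t' := z0)) z = \<phi> t" by (auto simp del: fun_upd_apply)
        then show False
          using t' z0(2) \<psi>(1) unfolding good_def by (metis fun_upd_apply image_eqI inj_onD)
      qed
      then show ?thesis
        using good_move[OF \<psi>(1) t'(1) z0] \<psi>(2) \<open>t' \<notin> J\<close> by (intro exI[of _ "\<psi>(t' := z0)"]) auto
    qed (use \<psi> in blast)
    then obtain \<psi>1 where \<psi>1: "good \<psi>1" "\<forall>z\<in>J. \<psi>1 z = \<phi> z" "\<phi> t \<notin> \<psi>1 ` I" by blast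
    have "good (\<psi>1(t := \<phi> t))"
      using good_move[OF \<psi>1(1) \<open>t \<in> I\<close> _ \<psi>1(3)] \<phi>(2) \<open>t \<in> I\<close> by blast
    moreover have "\<forall>z\<in>insert t J. (\<psi>1(t := \<phi> t)) z = \<phi> z"
      using \<psi>1(2) by simp
    ultimately show ?case
      by blast
  qed
  from this[OF subset_refl] show thesis
    using that by (auto simp: good_def)
qed

lemma factor_through_same_kernel:
  assumes "\<forall>x\<in>A. \<forall>y\<in>A. f x = f y \<longleftrightarrow> h x = h y"
  obtains \<phi> where "inj_on \<phi> (f ` A)" "\<forall>x\<in>A. h x = \<phi> (f x)"
proof
  have inv: "inv_into A f (f x) \<in> A" "f (inv_into A f (f x)) = f x" if "x \<in> A" for x
    using that by (auto intro: inv_into_into f_inv_into_f)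
  show "\<forall>x\<in>A. h x = (h \<circ> inv_into A f) (f x)"
    using assms inv by simp
  show "inj_on (h \<circ> inv_into A f) (f ` A)"
    using assms inv by (auto intro!: inj_onI)
qed

lemma kernel_classes_eq: "kernel_classes n f = (\<lambda>y. {x \<in> {1..n}. f x = y}) ` f ` {1..n}"
  unfolding kernel_classes_def by blast

lemma kernel_classes_subset: "X \<in> kernel_classes n f \<Longrightarrow> X \<subseteq> {1..n}"
  by (auto simp: kernel_classes_eq)

lemma kernel_classes_disjoint:
  "X \<in> kernel_classes n f \<Longrightarrow> Y \<in> kernel_classes n f \<Longrightarrow> X \<noteq> Y \<Longrightarrow> X \<inter> Y = {}"
  by (auto simp: kernel_classes_eq)

lemma ordered_partition_kernel_classes:
  obtains As where "ordered_partition n (kernel_type n f) As" "set As = kernel_classes n f"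
proof -
  let ?K = "kernel_classes n f"
  obtain xs where xs: "distinct xs" "set xs = ?K"
    using finite_distinct_list[of ?K] by (auto simp: kernel_classes_eq)
  define As where "As = rev (sort_key card xs)"
  have set_As: "set As = ?K" and distinct_As: "distinct As"
    by (simp_all add: As_def xs)
  have "map card (sort_key card xs) = sort (map card xs)"
    by (rule properties_for_sort[symmetric]) (simp_all add: mset_map)
  moreover have "image_mset card (mset_set ?K) = mset (map card xs)"
    using xs by (metis mset_set_set mset_map)
  ultimately have map_card: "map card As = kernel_type n f"
    unfolding As_def kernel_type_def rev_map[symmetric]
    by (simp only: sorted_list_of_multiset_mset)
  have "ordered_partition n (kernel_type n f) As"
    unfolding ordered_partition_def
  proof (intro conjI allI impI)
    show "length As = length (kernel_type n f)"
      using map_card length_map by metis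
    show "card (As ! i) = kernel_type n f ! i" if "i < length As" for i
      using map_card that nth_map by metis
    show "As ! i \<inter> As ! j = {}" if "i < length As" "j < length As" "i \<noteq> j" for i j
      using that distinct_As set_As nth_mem[of i As] nth_mem[of j As]
      by (intro kernel_classes_disjoint) (auto simp: nth_eq_iff_index_eq)
    show "\<Union> (set As) = {1..n}"
      unfolding set_As by (auto simp: kernel_classes_eq)
  qed
  then show thesis
    using set_As by (rule that)
qed

lemma kernel_classes_comp_Sn:
  assumes "p \<in> Sn n"
  shows "kernel_classes n (f \<circ> p) = (\<lambda>X. {1..n} \<inter> p -` X) ` kernel_classes n f"
proof -
  have p: "p permutes {1..n}"
    using assms by (simp add: Sn_iff_permutes)
  have "(f \<circ> p) ` {1..n} = f ` {1..n}"
    unfolding image_comp[symmetric] permutes_image[OF p] ..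
  moreover have "{x \<in> {1..n}. (f \<circ> p) x = y} = {1..n} \<inter> p -` {x \<in> {1..n}. f x = y}" for y
  proof (intro set_eqI iffI)
    fix x assume "x \<in> {x \<in> {1..n}. (f \<circ> p) x = y}"
    then show "x \<in> {1..n} \<inter> p -` {x \<in> {1..n}. f x = y}"
      using permutes_in_image[OF p, of x] by simp
  next
    fix x assume "x \<in> {1..n} \<inter> p -` {x \<in> {1..n}. f x = y}"
    then show "x \<in> {x \<in> {1..n}. (f \<circ> p) x = y}"
      by simp
  qed
  ultimately have "kernel_classes n (f \<circ> p) = (\<lambda>y. {1..n} \<inter> p -` {x \<in> {1..n}. f x = y}) ` f ` {1..n}"
    unfolding kernel_classes_eq by (simp only:)
  then show ?thesis
    unfolding kernel_classes_eq image_image .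
qed

lemma kernel_type_comp_Sn:
  assumes "p \<in> Sn n"
  shows "kernel_type n (f \<circ> p) = kernel_type n f"
proof -
  have p: "p permutes {1..n}"
    using assms by (simp add: Sn_iff_permutes)
  let ?K = "kernel_classes n f"
  define h where "h X = {1..n} \<inter> p -` X" for X
  have p_h: "p ` h X = X" if X: "X \<in> ?K" for X
  proof
    show "p ` h X \<subseteq> X"
      by (auto simp: h_def)
    show "X \<subseteq> p ` h X"
    proof
      fix x assume "x \<in> X"
      then have "x \<in> p ` {1..n}"
        using kernel_classes_subset[OF X] permutes_image[OF p] by auto
      then show "x \<in> p ` h X"
        using \<open>x \<in> X\<close> by (auto simp: h_def)
    qed
  qed
  have "inj_on h ?K"
    by (rule inj_on_inverseI[of _ "image p"]) (rule p_h)
  then have "image_mset card (mset_set (h ` ?K)) = image_mset (card \<circ> h) (mset_set ?K)"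
    by (simp add: image_mset_mset_set[symmetric] multiset.map_comp)
  also have "\<dots> = image_mset card (mset_set ?K)"
  proof (rule image_mset_cong)
    fix X assume "X \<in># mset_set ?K"
    then have "X \<in> ?K"
      by (simp add: kernel_classes_eq)
    then show "(card \<circ> h) X = card X"
      using card_image[OF permutes_inj_on[OF p, of "h X"]] p_h by simp
  qed
  finally show ?thesis
    unfolding kernel_type_def kernel_classes_comp_Sn[OF assms] h_def by simp
qed

lemma same_kernel_if_maps_kernel_classes:
  assumes g: "g \<in> Sn n" and maps: "(\<lambda>X. g ` X) ` kernel_classes n f \<subseteq> kernel_classes n h"
    and x: "x \<in> {1..n}" and y: "y \<in> {1..n}"
  shows "h (g x) = h (g y) \<longleftrightarrow> f x = f y"
proof -
  have g_perm: "g permutes {1..n}"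
    using g by (simp add: Sn_iff_permutes)
  define C where "C = {z \<in> {1..n}. f z = f x}"
  have "C \<in> kernel_classes n f"
    using x by (auto simp: kernel_classes_eq C_def)
  then have "g ` C \<in> kernel_classes n h"
    using maps by blast
  then obtain w where w: "g ` C = {z \<in> {1..n}. h z = w}"
    unfolding kernel_classes_def by blast
  have "h (g x) = w"
    using w x by (auto simp: C_def)
  then have "h (g x) = h (g y) \<longleftrightarrow> g y \<in> g ` C"
    using w y permutes_in_image[OF g_perm] by auto
  also have "\<dots> \<longleftrightarrow> y \<in> C"
    by (rule inj_on_image_mem_iff[OF permutes_inj_on[OF g_perm] y]) (auto simp: C_def)
  finally show ?thesis
    using y by (auto simp: C_def)
qed

lemma gen_insert_card_image_le:
  assumes G: "G \<subseteq> Sn n" "\<forall>g\<in>G. \<forall>h\<in>G. tmult g h \<in> G"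
  shows "x \<in> gen (insert a G) \<Longrightarrow> x \<in> G \<or> card (x ` {1..n}) \<le> card (a ` {1..n})"
proof (induction rule: gen.induct)
  case (mult x y)
  have image: "tmult x y ` {1..n} = y ` x ` {1..n}"
    by (auto simp: tmult_def)
  show ?case
  proof (cases "x \<in> G")
    case True
    then have "x ` {1..n} = {1..n}"
      using G(1) by (meson Sn_iff_permutes permutes_image subsetD)
    then show ?thesis
      using mult.IH(2) G(2) True image by auto
  next
    case False
    then show ?thesis
      using mult.IH(1) card_image_le[of "x ` {1..n}" y] image by simp
  qed
qed auto

lemma gen_insert_two_sided:
  assumes S: "id \<in> S" "\<forall>s\<in>S. \<forall>t\<in>S. tmult s t \<in> S"
    and base: "\<forall>s\<in>S. \<forall>t\<in>S. tmult (tmult s a) t \<in> gen T"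
  shows "x \<in> gen (insert a S) \<Longrightarrow> x \<in> S \<or> (\<forall>s\<in>S. \<forall>t\<in>S. tmult (tmult s x) t \<in> gen T)"
proof (induction rule: gen.induct)
  case (mult x y)
  have "tmult (tmult s (tmult x y)) t \<in> gen T"
    if not_both: "x \<notin> S \<or> y \<notin> S" and "s \<in> S" "t \<in> S" for s t
  proof -
    consider "x \<in> S" "y \<notin> S" | "x \<notin> S" "y \<in> S" | "x \<notin> S" "y \<notin> S"
      using not_both by blast
    then show ?thesis
    proof cases
      case 1
      then have "tmult (tmult (tmult s x) y) t \<in> gen T"
        using mult.IH(2) S(2) \<open>s \<in> S\<close> \<open>t \<in> S\<close> by simp
      then show ?thesis
        by (simp add: tmult_assoc)
    next
      case 2
      then have "tmult (tmult s x) (tmult y t) \<in> gen T"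
        using mult.IH(1) S(2) \<open>s \<in> S\<close> \<open>t \<in> S\<close> by simp
      then show ?thesis
        by (simp add: tmult_assoc)
    next
      case 3
      then have "tmult (tmult s x) id \<in> gen T" "tmult (tmult id y) t \<in> gen T"
        using mult.IH S(1) \<open>s \<in> S\<close> \<open>t \<in> S\<close> by (simp_all del: tmult_id)
      then have "tmult (tmult s x) (tmult y t) \<in> gen T"
        by (simp add: gen.mult)
      then show ?thesis
        by (simp add: tmult_assoc)
    qed
  qed
  then show ?case
    using S(2) by blast
qed (use base in auto)

locale homogeneous_transformation =
  fixes n k :: nat and a :: "nat \<Rightarrow> nat" and G :: "(nat \<Rightarrow> nat) set"
  assumes a_Tn: "a \<in> Tn n" and rank_a: "rank n a = k" and k_less_n: "k < n"
    and subgroup: "is_subgroup_Sn n G" and k_homogeneous: "k_homogeneous n k G"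
    and kernel_homogeneous: "lam_homogeneous n (kernel_type n a) G"
begin

abbreviation I :: "nat set" where "I \<equiv> a ` {1..n}"

abbreviation M :: "(nat \<Rightarrow> nat) set" where "M \<equiv> gen (insert a G)"

lemma G_Sn: "G \<subseteq> Sn n"
  using subgroup by (simp add: is_subgroup_Sn_def)

lemma G_mult: "\<forall>g\<in>G. \<forall>h\<in>G. tmult g h \<in> G"
  using subgroup by (simp add: is_subgroup_Sn_def)

lemma a_M: "a \<in> M" and G_M: "g \<in> G \<Longrightarrow> g \<in> M"
  by (simp_all add: gen.base)

lemma M_Tn: "x \<in> M \<Longrightarrow> x \<in> Tn n"
  using a_Tn G_Sn Sn_Tn by (intro gen_Tn[of "insert a G"]) auto

lemma a_mem: "x \<in> {1..n} \<Longrightarrow> a x \<in> {1..n}"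
  using a_Tn unfolding Tn_def by blast

lemma I_subset: "I \<subseteq> {1..n}"
  using a_mem by blast

lemma card_I: "card I = k"
  using rank_a by (simp add: rank_def)

lemma G_maps_I_onto:
  assumes "Q \<subseteq> {1..n}" "card Q = k"
  obtains g where "g \<in> G" "g ` I = Q"
  using k_homogeneous[unfolded k_homogeneous_def, rule_format, of I Q] assms I_subset card_I
  by blast

lemma G_same_kernel:
  assumes p: "p \<in> Sn n"
  obtains g where "g \<in> G" "\<forall>x\<in>{1..n}. \<forall>y\<in>{1..n}. a (g x) = a (g y) \<longleftrightarrow> a (p x) = a (p y)"
proof -
  obtain As where As: "ordered_partition n (kernel_type n (a \<circ> p)) As"
      "set As = kernel_classes n (a \<circ> p)"
    by (rule ordered_partition_kernel_classes)
  obtain Bs where Bs: "ordered_partition n (kernel_type n a) Bs" "set Bs = kernel_classes n a"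
    by (rule ordered_partition_kernel_classes)
  have "ordered_partition n (kernel_type n a) As"
    using As(1) kernel_type_comp_Sn[OF p] by simp
  then obtain g where g: "g \<in> G" "(\<lambda>X. g ` X) ` set As = set Bs"
    using kernel_homogeneous[unfolded lam_homogeneous_def, rule_format, of As Bs] Bs(1) by blast
  have "a (g x) = a (g y) \<longleftrightarrow> (a \<circ> p) x = (a \<circ> p) y" if "x \<in> {1..n}" "y \<in> {1..n}" for x y
    using g G_Sn As(2) Bs(2) that
    by (intro same_kernel_if_maps_kernel_classes[of g n "a \<circ> p" a]) auto
  with g(1) show thesis
    by (intro that) auto
qed

(* u = g0 a g1 maps Q injectively into itself, so a power of u is the identity on Q, and like u
   it is constant on the kernel classes of a p. *)
lemma M_element_fixing_transversal:
  assumes p: "p \<in> Sn n" and Q: "Q \<subseteq> {1..n}" "card Q = k" and inj: "inj_on (a \<circ> p) Q"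
  obtains e where "e \<in> M" "\<forall>q\<in>Q. e q = q"
    "\<forall>x\<in>{1..n}. \<forall>y\<in>{1..n}. a (p x) = a (p y) \<longrightarrow> e x = e y"
proof -
  obtain g0 where g0: "g0 \<in> G"
    "\<forall>x\<in>{1..n}. \<forall>y\<in>{1..n}. a (g0 x) = a (g0 y) \<longleftrightarrow> a (p x) = a (p y)"
    using G_same_kernel[OF p] by blast
  obtain g1 where g1: "g1 \<in> G" "g1 ` I = Q"
    using G_maps_I_onto[OF Q] by blast
  have g0_perm: "g0 permutes {1..n}" and g1_perm: "g1 permutes {1..n}"
    using g0(1) g1(1) G_Sn by (auto simp: Sn_iff_permutes)
  define u where "u = tmult (tmult g0 a) g1"
  have u_M: "u \<in> M"
    unfolding u_def using g0(1) g1(1) by (intro gen.mult a_M G_M)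
  have u_apply: "u x = g1 (a (g0 x))" for x
    by (simp add: u_def tmult_def)
  have g0_I: "a (g0 x) \<in> I" if "x \<in> {1..n}" for x
    using that permutes_in_image[OF g0_perm] by simp
  have u_Q: "u ` Q \<subseteq> Q"
  proof
    fix z assume "z \<in> u ` Q"
    then obtain q where "q \<in> Q" "z = g1 (a (g0 q))"
      by (auto simp: u_apply)
    then have "z \<in> g1 ` I"
      using Q(1) g0_I by blast
    then show "z \<in> Q"
      using g1(2) by simp
  qed
  have "inj_on u Q"
  proof (rule inj_onI)
    fix q1 q2 assume q: "q1 \<in> Q" "q2 \<in> Q" "u q1 = u q2"
    then have "a (g0 q1) = a (g0 q2)"
      using injD[OF permutes_inj[OF g1_perm]] by (simp add: u_apply)
    moreover have "q1 \<in> {1..n}" "q2 \<in> {1..n}"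
      using q Q(1) by auto
    ultimately have "(a \<circ> p) q1 = (a \<circ> p) q2"
      using g0(2) by simp
    then show "q1 = q2"
      using inj_onD[OF inj] q(1,2) by blast
  qed
  then obtain m where m: "0 < m" "\<And>q. q \<in> Q \<Longrightarrow> (u ^^ m) q = q"
    using inj_on_self_map_funpow_fixes[OF finite_subset[OF Q(1)] u_Q] by blast
  obtain m' where "m = Suc m'"
    using m(1) gr0_implies_Suc by blast
  then have u_power: "u ^^ m = (u ^^ m') \<circ> u"
    by (simp only: funpow_Suc_right)
  have u_kernel: "u x = u y" if "x \<in> {1..n}" "y \<in> {1..n}" "a (p x) = a (p y)" for x y
  proof -
    have "a (g0 x) = a (g0 y)"
      using that g0(2) by simp
    then show ?thesis
      by (simp add: u_apply)
  qed
  have "\<forall>x\<in>{1..n}. \<forall>y\<in>{1..n}. a (p x) = a (p y) \<longrightarrow> (u ^^ m) x = (u ^^ m) y"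
    using u_power u_kernel by (simp only: comp_apply) metis
  then show thesis
    using that[of "u ^^ m"] gen_funpow[OF u_M m(1)] m(2) by blast
qed

lemma kernel_transversal_with_partner:
  obtains T c1 c2 where "T \<subseteq> {1..n}" "card T = k" "inj_on a T"
    "c1 \<in> T" "c2 \<in> {1..n}" "c2 \<notin> T" "a c2 = a c1"
proof -
  define r where "r = inv_into {1..n} a"
  have r: "r w \<in> {1..n}" "a (r w) = w" if "w \<in> I" for w
    using inv_into_into[OF that] f_inv_into_f[OF that] by (simp_all add: r_def)
  define T where "T = r ` I"
  have inj_r: "inj_on r I"
    using r(2) by (rule inj_on_inverseI)
  have T: "T \<subseteq> {1..n}" "card T = k"
    using r(1) card_image[OF inj_r] card_I by (auto simp: T_def)
  have "inj_on a T"
    unfolding T_def using r(2) by (auto intro!: inj_onI)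
  obtain c2 where c2: "c2 \<in> {1..n}" "c2 \<notin> T"
    using exists_not_in_image[of I "{1..n}" r] card_I k_less_n unfolding T_def by auto
  have "r (a c2) \<in> T" "a (r (a c2)) = a c2"
    using c2(1) r by (auto simp: T_def)
  with T \<open>inj_on a T\<close> c2 show thesis
    by (intro that[of T "r (a c2)" c2]) auto
qed

(* p puts x and y into one kernel class of a while keeping a p injective on (Q - {x}) \<union> {y}. *)
lemma move_point:
  assumes Q: "Q \<subseteq> {1..n}" "card Q = k" and x: "x \<in> Q" and y: "y \<in> {1..n}" "y \<notin> Q"
  obtains e where "e \<in> M" "e x = y" "\<forall>q\<in>Q - {x}. e q = q"
proof -
  obtain T c1 c2 where T: "T \<subseteq> {1..n}" "card T = k" "inj_on a T"
    and c: "c1 \<in> T" "c2 \<in> {1..n}" "c2 \<notin> T" "a c2 = a c1"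
    by (rule kernel_transversal_with_partner)
  obtain p where p: "p \<in> Sn n" "p ` Q = T" "p x = c1" "p y = c2"
    using Sn_with_values[OF Q(1) T(1) _ x c(1) y c(2,3)] Q(2) T(2) by auto
  have p_inj: "inj p"
    using p(1) by (simp add: Sn_iff_permutes permutes_inj)
  define Q' where "Q' = insert y (Q - {x})"
  have Q': "Q' \<subseteq> {1..n}" "card Q' = k"
    using Q x y finite_subset[OF Q(1)] card_gt_0_iff[of Q]
    by (auto simp: Q'_def)
  have "p ` Q' = insert c2 (T - {c1})"
    using p(2-4) image_set_diff[OF p_inj, of Q "{x}"] by (simp add: Q'_def)
  moreover have "inj_on a (insert c2 (T - {c1}))"
    using T(3) c inj_on_image_mem_iff[OF T(3)] by (auto simp: inj_on_def)
  ultimately have "inj_on (a \<circ> p) Q'"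
    using inj_on_subset[OF p_inj] by (intro comp_inj_on) auto
  then obtain e where e: "e \<in> M" "\<forall>q\<in>Q'. e q = q"
      "\<forall>x\<in>{1..n}. \<forall>y\<in>{1..n}. a (p x) = a (p y) \<longrightarrow> e x = e y"
    using M_element_fixing_transversal[OF p(1) Q'] by blast
  have "x \<in> {1..n}"
    using x Q(1) by blast
  then have "e x = e y"
    using e(3)[rule_format, OF _ y(1)] p(3,4) c(4) by simp
  then show thesis
    using that[of e] e(1,2) by (simp add: Q'_def)
qed

definition realised_in_M :: "(nat \<Rightarrow> nat) \<Rightarrow> bool" where
  "realised_in_M \<phi> \<longleftrightarrow> (\<exists>m\<in>M. \<forall>x\<in>{1..n}. m x = \<phi> (a x))"

lemma realised_in_M_fun_upd:
  assumes "realised_in_M \<psi>" and inj: "inj_on \<psi> I" and "\<psi> ` I \<subseteq> {1..n}"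
    and "t \<in> I" "v \<in> {1..n}" "v \<notin> \<psi> ` I"
  shows "realised_in_M (\<psi>(t := v))"
proof -
  obtain m where m: "m \<in> M" "\<forall>x\<in>{1..n}. m x = \<psi> (a x)"
    using assms(1) by (auto simp: realised_in_M_def)
  have "card (\<psi> ` I) = k"
    using card_image[OF inj] card_I by simp
  then obtain e where e: "e \<in> M" "e (\<psi> t) = v" "\<forall>q\<in>\<psi> ` I - {\<psi> t}. e q = q"
    using move_point[of "\<psi> ` I" "\<psi> t" v] assms(3-6) by blast
  have "e (\<psi> w) = (\<psi>(t := v)) w" if "w \<in> I" for w
  proof (cases "w = t")
    case False
    then have "\<psi> w \<in> \<psi> ` I - {\<psi> t}"
      using that \<open>t \<in> I\<close> inj_onD[OF inj] by blast
    then show ?thesis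
      using e(3) False by simp
  qed (use e(2) in simp)
  then have "\<forall>x\<in>{1..n}. tmult m e x = (\<psi>(t := v)) (a x)"
    using m(2) by (simp add: tmult_def)
  then show ?thesis
    unfolding realised_in_M_def using gen.mult[OF m(1) e(1)] by blast
qed

lemma realised_in_M_injection:
  assumes "inj_on \<phi> I" "\<phi> ` I \<subseteq> {1..n}"
  shows "realised_in_M \<phi>"
proof -
  have "realised_in_M id"
    using a_M by (auto simp: realised_in_M_def)
  then obtain \<psi> where "realised_in_M \<psi>" "\<forall>z\<in>I. \<psi> z = \<phi> z"
    using injections_reachable_by_moves[of I "{1..n}" realised_in_M id \<phi>]
      realised_in_M_fun_upd card_I k_less_n I_subset assms by auto
  then show ?thesis
    by (auto simp: realised_in_M_def)
qed

lemma Sn_a_Sn_in_M: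
  assumes h0: "h0 \<in> Sn n" and h1: "h1 \<in> Sn n"
  shows "tmult (tmult h0 a) h1 \<in> M"
proof -
  obtain g where g: "g \<in> G" "\<forall>x\<in>{1..n}. \<forall>y\<in>{1..n}. a (g x) = a (g y) \<longleftrightarrow> a (h0 x) = a (h0 y)"
    using G_same_kernel[OF h0] by blast
  have Sn_g: "g \<in> Sn n"
    using g(1) G_Sn by blast
  then have g_perm: "g permutes {1..n}"
    by (simp add: Sn_iff_permutes)
  have "inj h1"
    using h1 by (simp add: Sn_iff_permutes permutes_inj)
  then have "\<forall>x\<in>{1..n}. \<forall>y\<in>{1..n}. (a \<circ> g) x = (a \<circ> g) y \<longleftrightarrow> (h1 \<circ> a \<circ> h0) x = (h1 \<circ> a \<circ> h0) y"
    using g(2) by (simp add: inj_eq)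
  then obtain \<phi> where \<phi>: "inj_on \<phi> ((a \<circ> g) ` {1..n})"
    "\<forall>x\<in>{1..n}. (h1 \<circ> a \<circ> h0) x = \<phi> ((a \<circ> g) x)"
    by (rule factor_through_same_kernel)
  have image: "(a \<circ> g) ` {1..n} = I"
    unfolding image_comp[symmetric] permutes_image[OF g_perm] ..
  have "\<phi> ` I \<subseteq> {1..n}"
  proof
    fix v assume "v \<in> \<phi> ` I"
    then obtain x where "x \<in> {1..n}" "v = h1 (a (h0 x))"
      using \<phi>(2) unfolding image[symmetric] by auto
    then show "v \<in> {1..n}"
      using Sn_mem[OF h1] a_mem Sn_mem[OF h0] by blast
  qed
  then obtain m where m: "m \<in> M" "\<forall>x\<in>{1..n}. m x = \<phi> (a x)"
    using realised_in_M_injection[of \<phi>] \<phi>(1) unfolding image realised_in_M_def by blast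
  have "tmult (tmult h0 a) h1 = tmult g m"
  proof (rule Tn_eqI)
    show "tmult (tmult h0 a) h1 \<in> Tn n"
      using h0 h1 a_Tn Sn_Tn by (intro tmult_Tn) auto
    show "tmult g m \<in> Tn n"
      using gen.mult[OF G_M[OF g(1)] m(1)] by (rule M_Tn)
    show "tmult (tmult h0 a) h1 x = tmult g m x" if "x \<in> {1..n}" for x
      using \<phi>(2) m(2) that Sn_mem[OF Sn_g that] by (simp add: tmult_def)
  qed
  then show ?thesis
    using gen.mult[OF G_M[OF g(1)] m(1)] by simp
qed

end

theorem lemma5p2:
  fixes n k :: nat and a :: "nat \<Rightarrow> nat" and G :: "(nat \<Rightarrow> nat) set"
  assumes "a \<in> Tn n"
    and "rank n a = k" and "k < n"
    and "is_subgroup_Sn n G"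
    and "k_homogeneous n k G"
    and "lam_homogeneous n (kernel_type n a) G"
  shows "gen (insert a G) - G = gen (insert a (Sn n)) - Sn n"
proof -
  interpret homogeneous_transformation n k a G
    using assms by unfold_locales
  show ?thesis
  proof (intro equalityI subsetI)
    fix x assume x: "x \<in> gen (insert a G) - G"
    then have "card (x ` {1..n}) < n"
      using gen_insert_card_image_le[OF G_Sn G_mult] card_I k_less_n by fastforce
    then have "x \<notin> Sn n"
      by (auto simp: Sn_iff_permutes permutes_image)
    moreover have "x \<in> gen (insert a (Sn n))"
      using x G_Sn gen_mono[of "insert a G"] by blast
    ultimately show "x \<in> gen (insert a (Sn n)) - Sn n"
      by blast
  next
    fix x assume x: "x \<in> gen (insert a (Sn n)) - Sn n"
    then have "tmult (tmult id x) id \<in> gen (insert a G)"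
      using gen_insert_two_sided[of "Sn n" a "insert a G" x] id_Sn tmult_Sn Sn_a_Sn_in_M by blast
    then show "x \<in> gen (insert a G) - G"
      using x G_Sn by auto
  qed
qed

end
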